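(* Let $G$ be a directed clique on $[n]$ and $W$ any (nondegenerate) CTLN $W(G,\varepsilon,\delta)$ with legal parameters. Then $\operatorname{FP}(W)=\{\sigma\}$, where $\sigma$ is the unique target-free clique of $G$. In particular, a directed clique is a stable motif if and only if it is a clique.
   Context: $G$ is a simple directed graph. $G$ is a directed clique if its nodes can be ordered $1,\dots,n$ so that $i\to j$ whenever $i<j$ (no constraint on back edges). A clique is a set of nodes pairwise bidirectionally connected; a target of $\sigma$ is $k\notin\sigma$ with $i\to k$ for all $i\in\sigma$; target-free means no target. Legal parameters: $\delta>0$, $0<\varepsilon<\frac{\delta}{\delta+1}$. $W(G,\varepsilon,\delta)$ has $W_{ii}=0$, $W_{ij}=-1+\varepsilon$ if $j\to i$, $W_{ij}=-1-\delta$ if $i\ne j$, $j\not\to i$; dynamics $\dot x_i=-x_i+[\sum_jW_{ij}x_j+\theta]_+$, $\theta>0$; nondegenerate means $\det(I-W_\sigma)\ne0$ and all Cramer determinants for $(I-W_\sigma)x=\theta 1_\sigma$ nonzero. $\operatorname{FP}(W)$ is the set of supports $\{i:x^*_i>0\}$ of fixed points $x^*\in\mathbb R^n_{\ge0}$. $G$ is a stable motif if $[n]\in\operatorname{FP}(W)$ and all eigenvalues of $I-W$ have positive real part. *)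

theory Defs
  imports "HOL-Analysis.Analysis"
begin

text \<open>Graphs on the vertex set [n] = {0..<n}; E i j means the edge i -> j.\<close>

definition simple_digraph :: "nat \<Rightarrow> (nat \<Rightarrow> nat \<Rightarrow> bool) \<Rightarrow> bool" where
  "simple_digraph n E \<longleftrightarrow> (\<forall>i<n. \<not> E i i)"

definition directed_clique :: "nat \<Rightarrow> (nat \<Rightarrow> nat \<Rightarrow> bool) \<Rightarrow> bool" where
  "directed_clique n E \<longleftrightarrow>
     (\<exists>p. bij_betw p {0..<n} {0..<n} \<and> (\<forall>i<n. \<forall>j<n. i < j \<longrightarrow> E (p i) (p j)))"

definition is_clique :: "(nat \<Rightarrow> nat \<Rightarrow> bool) \<Rightarrow> nat set \<Rightarrow> bool" where
  "is_clique E \<sigma> \<longleftrightarrow> (\<forall>i\<in>\<sigma>. \<forall>j\<in>\<sigma>. i \<noteq> j \<longrightarrow> E i j \<and> E j i)"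

definition is_target :: "(nat \<Rightarrow> nat \<Rightarrow> bool) \<Rightarrow> nat set \<Rightarrow> nat \<Rightarrow> bool" where
  "is_target E \<sigma> k \<longleftrightarrow> k \<notin> \<sigma> \<and> (\<forall>i\<in>\<sigma>. E i k)"

definition target_free :: "nat \<Rightarrow> (nat \<Rightarrow> nat \<Rightarrow> bool) \<Rightarrow> nat set \<Rightarrow> bool" where
  "target_free n E \<sigma> \<longleftrightarrow> \<not> (\<exists>k<n. is_target E \<sigma> k)"

definition legal_params :: "real \<Rightarrow> real \<Rightarrow> bool" where
  "legal_params \<epsilon> \<delta> \<longleftrightarrow> \<delta> > 0 \<and> 0 < \<epsilon> \<and> \<epsilon> < \<delta> / (\<delta> + 1)"

definition ctln_W :: "(nat \<Rightarrow> nat \<Rightarrow> bool) \<Rightarrow> real \<Rightarrow> real \<Rightarrow> nat \<Rightarrow> nat \<Rightarrow> real" where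
  "ctln_W E \<epsilon> \<delta> i j = (if i = j then 0 else if E j i then -1 + \<epsilon> else -1 - \<delta>)"

definition det_on :: "nat set \<Rightarrow> (nat \<Rightarrow> nat \<Rightarrow> real) \<Rightarrow> real" where
  "det_on S A = (\<Sum>p | p permutes S. of_int (sign p) * (\<Prod>i\<in>S. A i (p i)))"

definition I_minus :: "(nat \<Rightarrow> nat \<Rightarrow> real) \<Rightarrow> nat \<Rightarrow> nat \<Rightarrow> real" where
  "I_minus W i j = (if i = j then 1 else 0) - W i j"

text \<open>Cramer matrix: column k of (I - W_sigma) replaced by theta * 1_sigma.\<close>
definition cramer_mat :: "(nat \<Rightarrow> nat \<Rightarrow> real) \<Rightarrow> real \<Rightarrow> nat \<Rightarrow> nat \<Rightarrow> nat \<Rightarrow> real" where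
  "cramer_mat W \<theta> k i j = (if j = k then \<theta> else I_minus W i j)"

definition nondegenerate :: "nat \<Rightarrow> (nat \<Rightarrow> nat \<Rightarrow> real) \<Rightarrow> real \<Rightarrow> bool" where
  "nondegenerate n W \<theta> \<longleftrightarrow>
     (\<forall>\<sigma>. \<sigma> \<subseteq> {0..<n} \<and> \<sigma> \<noteq> {} \<longrightarrow>
        det_on \<sigma> (I_minus W) \<noteq> 0 \<and> (\<forall>k\<in>\<sigma>. det_on \<sigma> (cramer_mat W \<theta> k) \<noteq> 0))"

text \<open>Fixed points of  dx_i/dt = -x_i + [sum_j W_ij x_j + theta]_+  in R^n_{>=0}.\<close>
definition is_fixed_point :: "nat \<Rightarrow> (nat \<Rightarrow> nat \<Rightarrow> real) \<Rightarrow> real \<Rightarrow> (nat \<Rightarrow> real) \<Rightarrow> bool" where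
  "is_fixed_point n W \<theta> x \<longleftrightarrow>
     (\<forall>i<n. x i \<ge> 0) \<and> (\<forall>i<n. x i = max 0 ((\<Sum>j<n. W i j * x j) + \<theta>))"

definition FP :: "nat \<Rightarrow> (nat \<Rightarrow> nat \<Rightarrow> real) \<Rightarrow> real \<Rightarrow> nat set set" where
  "FP n W \<theta> = {\<sigma>. \<exists>x. is_fixed_point n W \<theta> x \<and> \<sigma> = {i. i < n \<and> x i > 0}}"

definition eigenvalue_of :: "nat \<Rightarrow> (nat \<Rightarrow> nat \<Rightarrow> real) \<Rightarrow> complex \<Rightarrow> bool" where
  "eigenvalue_of n A \<mu> \<longleftrightarrow>
     (\<exists>v :: nat \<Rightarrow> complex. (\<exists>i<n. v i \<noteq> 0) \<and>
        (\<forall>i<n. (\<Sum>j<n. complex_of_real (A i j) * v j) = \<mu> * v i))"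

definition stable_motif :: "nat \<Rightarrow> (nat \<Rightarrow> nat \<Rightarrow> real) \<Rightarrow> real \<Rightarrow> bool" where
  "stable_motif n W \<theta> \<longleftrightarrow>
     {0..<n} \<in> FP n W \<theta> \<and> (\<forall>\<mu>. eigenvalue_of n (I_minus W) \<mu> \<longrightarrow> Re \<mu> > 0)"

end

theory Submission
  imports Defs
begin

text \<open>
  A directed clique carries a ranking (its order 1, ..., n) in which every node sends an edge to
  every node of higher rank. Scanning the nodes by decreasing rank and keeping a node iff it
  receives edges from all nodes kept so far yields a target-free clique; comparing two
  target-free cliques at the highest-ranked node where they differ shows that it is the only one.

  Three graph rules hold for CTLNs on arbitrary graphs: the uniform vector on a target-free
  clique is a fixed point; the support of a fixed point has no target; and no support contains
  nodes j, k with j \<rightarrow> k but not k \<rightarrow> j such that every node of the support sending an edge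
  to j also sends one to k (graphical domination). In a directed clique a support that is not
  a clique contains such a pair: take a missing back edge from k to j with k of maximal rank.
  So every support is a target-free clique and FP(W) = {\<sigma>}. When G is complete, I - W has
  the eigenvalues \<epsilon> and \<epsilon> + n(1 - \<epsilon>).
\<close>

lemma fixed_point_active:
  assumes "is_fixed_point n W \<theta> x" "i < n" "0 < x i"
  shows "x i = (\<Sum>j<n. W i j * x j) + \<theta>"
proof -
  have "x i = max 0 ((\<Sum>j<n. W i j * x j) + \<theta>)" using assms unfolding is_fixed_point_def by blast
  with \<open>0 < x i\<close> show ?thesis by (auto simp: max_def split: if_splits)
qed

lemma fixed_point_inactive:
  assumes "is_fixed_point n W \<theta> x" "i < n" "\<not> 0 < x i"
  shows "(\<Sum>j<n. W i j * x j) + \<theta> \<le> 0"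
proof -
  have "x i = max 0 ((\<Sum>j<n. W i j * x j) + \<theta>)" using assms unfolding is_fixed_point_def by blast
  with \<open>\<not> 0 < x i\<close> show ?thesis by (auto simp: max_def split: if_splits)
qed

lemma ctln_W_off_diagonal_le:
  assumes "0 < \<epsilon>" "0 < \<delta>" "i \<noteq> j"
  shows "ctln_W E \<epsilon> \<delta> i j \<le> \<epsilon> - 1"
  using assms unfolding ctln_W_def by auto

lemma ctln_row_le:
  assumes "0 < \<epsilon>" "0 < \<delta>" "i < n" "\<forall>j<n. 0 \<le> x j"
  shows "(\<Sum>j<n. ctln_W E \<epsilon> \<delta> i j * x j) \<le> (\<epsilon> - 1) * ((\<Sum>j<n. x j) - x i)"
proof -
  have "(\<Sum>j<n. ctln_W E \<epsilon> \<delta> i j * x j) \<le> (\<Sum>j<n. (\<epsilon> - 1) * x j - (if j = i then (\<epsilon> - 1) * x j else 0))"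
  proof (rule sum_mono)
    fix j assume "j \<in> {..<n}"
    then show "ctln_W E \<epsilon> \<delta> i j * x j \<le> (\<epsilon> - 1) * x j - (if j = i then (\<epsilon> - 1) * x j else 0)"
      using assms ctln_W_off_diagonal_le[of \<epsilon> \<delta> i j E]
      by (cases "j = i") (auto simp: ctln_W_def intro: mult_right_mono)
  qed
  also have "\<dots> = (\<epsilon> - 1) * ((\<Sum>j<n. x j) - x i)"
    using assms(3) by (simp add: sum_subtractf sum_distrib_left right_diff_distrib)
  finally show ?thesis .
qed

lemma target_free_fixed_point_support:
  assumes fp: "is_fixed_point n (ctln_W E \<epsilon> \<delta>) \<theta> x"
    and "0 < \<epsilon>" "\<epsilon> < 1" "0 < \<delta>" "0 < \<theta>"
  shows "target_free n E {i. i < n \<and> 0 < x i}"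
  unfolding target_free_def
proof
  assume "\<exists>k<n. is_target E {i. i < n \<and> 0 < x i} k"
  then obtain k where "k < n" and target: "\<not> 0 < x k" "\<forall>j<n. 0 < x j \<longrightarrow> E j k"
    unfolding is_target_def by auto
  have nonneg: "\<forall>j<n. 0 \<le> x j" using fp unfolding is_fixed_point_def by blast
  define S where "S = (\<Sum>j<n. x j)"
  have "(\<Sum>j<n. ctln_W E \<epsilon> \<delta> k j * x j) = (\<Sum>j<n. (\<epsilon> - 1) * x j)"
  proof (rule sum.cong)
    fix j assume "j \<in> {..<n}"
    with nonneg target show "ctln_W E \<epsilon> \<delta> k j * x j = (\<epsilon> - 1) * x j"
      by (cases "0 < x j") (auto simp: ctln_W_def)
  qed simp
  then have k_off: "(\<epsilon> - 1) * S + \<theta> \<le> 0"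
    using fixed_point_inactive[OF fp \<open>k < n\<close> target(1)] by (simp add: S_def sum_distrib_left)
  then have "0 < (1 - \<epsilon>) * S" using \<open>0 < \<theta>\<close> by (simp add: algebra_simps)
  then have "0 < S" using \<open>\<epsilon> < 1\<close> by (simp add: zero_less_mult_iff)
  then obtain j where "j < n" "0 < x j"
    unfolding S_def by (metis lessThan_iff not_less sum_nonpos)
  then have "x j \<le> (\<epsilon> - 1) * (S - x j) + \<theta>"
    using fixed_point_active[OF fp] ctln_row_le[OF assms(2,4) _ nonneg] unfolding S_def by force
  then have "\<epsilon> * x j \<le> (\<epsilon> - 1) * S + \<theta>" by (simp add: algebra_simps)
  moreover have "0 < \<epsilon> * x j" using \<open>0 < x j\<close> \<open>0 < \<epsilon>\<close> by simp
  ultimately show False using k_off by linarith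
qed

lemma no_domination_in_fixed_point_support:
  assumes fp: "is_fixed_point n (ctln_W E \<epsilon> \<delta>) \<theta> x"
    and "0 < \<epsilon>" "0 < \<delta>"
    and "j < n" "k < n" "0 < x j" "0 < x k" "j \<noteq> k" "E j k" "\<not> E k j"
    and dominated: "\<forall>i<n. i \<noteq> j \<and> i \<noteq> k \<and> 0 < x i \<and> E i j \<longrightarrow> E i k"
  shows False
proof -
  let ?W = "ctln_W E \<epsilon> \<delta>"
  have nonneg: "\<forall>i<n. 0 \<le> x i" using fp unfolding is_fixed_point_def by blast
  have "(\<Sum>i<n. ?W j i * x i + (if i = j then (\<epsilon> - 1) * x i else 0) + (if i = k then (1 + \<delta>) * x i else 0))
        \<le> (\<Sum>i<n. ?W k i * x i)"
  proof (rule sum_mono)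
    fix i assume "i \<in> {..<n}"
    then have "i < n" by simp
    consider "i = j" | "i = k" | "i \<noteq> j" "i \<noteq> k" by blast
    then show "?W j i * x i + (if i = j then (\<epsilon> - 1) * x i else 0) + (if i = k then (1 + \<delta>) * x i else 0)
        \<le> ?W k i * x i"
    proof cases
      case 3
      have "?W j i * x i \<le> ?W k i * x i"
      proof (cases "0 < x i")
        case True
        then have "?W j i \<le> ?W k i"
          using dominated \<open>i < n\<close> 3 assms(2,3) unfolding ctln_W_def by auto
        then show ?thesis using True by (simp add: mult_right_mono)
      qed (use nonneg \<open>i < n\<close> in force)
      then show ?thesis using 3 by simp
    qed (use assms(8-10) in \<open>auto simp: ctln_W_def algebra_simps\<close>)
  qed
  then have "(\<Sum>i<n. ?W j i * x i) + (\<epsilon> - 1) * x j + (1 + \<delta>) * x k \<le> (\<Sum>i<n. ?W k i * x i)"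
    using assms(4,5) by (simp add: sum.distrib)
  then have "\<epsilon> * x j + \<delta> * x k \<le> 0"
    using fixed_point_active[OF fp assms(4,6)] fixed_point_active[OF fp assms(5,7)]
    by (simp add: algebra_simps)
  moreover have "0 < \<epsilon> * x j" "0 < \<delta> * x k" using assms(2,3,6,7) by simp_all
  ultimately show False by linarith
qed

lemma target_free_clique_in_FP:
  assumes "s \<subseteq> {0..<n}" "is_clique E s" "target_free n E s"
    and "0 < \<epsilon>" "\<epsilon> < 1" "0 < \<delta>" "0 < \<theta>"
  shows "s \<in> FP n (ctln_W E \<epsilon> \<delta>) \<theta>"
proof -
  let ?W = "ctln_W E \<epsilon> \<delta>"
  \<comment> \<open>c solves the equation c = (card s - 1) (\<epsilon> - 1) c + \<theta> of the rows in s\<close>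
  define c where "c = \<theta> / (\<epsilon> + real (card s) * (1 - \<epsilon>))"
  have "0 < \<epsilon> + real (card s) * (1 - \<epsilon>)" using assms(4,5) by (simp add: add_pos_nonneg)
  then have "0 < c" and \<theta>_eq: "\<theta> = c * (\<epsilon> + real (card s) * (1 - \<epsilon>))"
    using \<open>0 < \<theta>\<close> unfolding c_def by simp_all
  define x where "x i = (if i \<in> s then c else 0)" for i
  have "finite s" using assms(1) finite_subset by blast
  have card_remove: "real (card (s - {j})) = real (card s) - 1" if "j \<in> s" for j
  proof -
    have "0 < card s" using that \<open>finite s\<close> card_gt_0_iff by blast
    then show ?thesis using that \<open>finite s\<close> by (simp add: of_nat_diff)
  qed
  have row: "(\<Sum>j<n. ?W i j * x j) = c * (\<Sum>j\<in>s. ?W i j)" for i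
  proof -
    have "(\<Sum>j<n. ?W i j * x j) = (\<Sum>j<n. if j \<in> s then ?W i j * c else 0)"
      unfolding x_def by (intro sum.cong) auto
    also have "\<dots> = (\<Sum>j\<in>{..<n} \<inter> s. ?W i j * c)"
      by (simp add: sum.inter_restrict)
    also have "{..<n} \<inter> s = s" using assms(1) by auto
    finally show ?thesis by (simp add: sum_distrib_left mult.commute)
  qed
  have "0 \<le> x i" for i using \<open>0 < c\<close> unfolding x_def by simp
  moreover have "x i = max 0 ((\<Sum>j<n. ?W i j * x j) + \<theta>)" if "i < n" for i
  proof (cases "i \<in> s")
    case True
    have "(\<Sum>j\<in>s. ?W i j) = (\<Sum>j\<in>s - {i}. \<epsilon> - 1)"
      using sum.remove[OF \<open>finite s\<close> True, of "?W i"] assms(2) True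
      by (auto simp: ctln_W_def is_clique_def intro!: sum.cong)
    also have "\<dots> = (real (card s) - 1) * (\<epsilon> - 1)"
      using card_remove[OF True] by simp
    finally have row_s: "(\<Sum>j\<in>s. ?W i j) = (real (card s) - 1) * (\<epsilon> - 1)" .
    have "(\<Sum>j<n. ?W i j * x j) + \<theta> = c"
      unfolding row row_s \<theta>_eq by (simp add: algebra_simps)
    then show ?thesis using True \<open>0 < c\<close> unfolding x_def by simp
  next
    case False
    obtain j0 where "j0 \<in> s" "\<not> E j0 i"
      using assms(3) False \<open>i < n\<close> unfolding target_free_def is_target_def by blast
    moreover have "i \<noteq> j0" using False \<open>j0 \<in> s\<close> by blast
    ultimately have "(\<Sum>j\<in>s. ?W i j) = (- 1 - \<delta>) + (\<Sum>j\<in>s - {j0}. ?W i j)"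
      using sum.remove[OF \<open>finite s\<close>, of j0 "?W i"] by (simp add: ctln_W_def)
    also have "(\<Sum>j\<in>s - {j0}. ?W i j) \<le> (\<Sum>j\<in>s - {j0}. \<epsilon> - 1)"
      using False assms(4,6) by (intro sum_mono ctln_W_off_diagonal_le) auto
    also have "\<dots> = (real (card s) - 1) * (\<epsilon> - 1)"
      using card_remove[OF \<open>j0 \<in> s\<close>] by simp
    finally have "c * (\<Sum>j\<in>s. ?W i j) \<le> c * (- 1 - \<delta> + (real (card s) - 1) * (\<epsilon> - 1))"
      using \<open>0 < c\<close> by (intro mult_left_mono) auto
    then have "(\<Sum>j<n. ?W i j * x j) + \<theta> \<le> - \<delta> * c"
      unfolding row \<theta>_eq by (simp add: algebra_simps)
    moreover have "0 < \<delta> * c" using \<open>0 < c\<close> \<open>0 < \<delta>\<close> by simp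
    ultimately show ?thesis using False unfolding x_def by simp
  qed
  ultimately have "is_fixed_point n ?W \<theta> x"
    unfolding is_fixed_point_def by blast
  moreover have "s = {i. i < n \<and> 0 < x i}" using assms(1) \<open>0 < c\<close> unfolding x_def by auto
  ultimately show ?thesis unfolding FP_def by blast
qed

lemma complete_ctln_eigenvalues:
  assumes "is_clique E {0..<n}" and "eigenvalue_of n (I_minus (ctln_W E \<epsilon> \<delta>)) \<mu>"
  shows "\<mu> = of_real \<epsilon> \<or> \<mu> = of_real (\<epsilon> + real n * (1 - \<epsilon>))"
proof -
  obtain v where "\<exists>i<n. v i \<noteq> 0"
    and eigen: "\<forall>i<n. (\<Sum>j<n. complex_of_real (I_minus (ctln_W E \<epsilon> \<delta>) i j) * v j) = \<mu> * v i"
    using assms(2) unfolding eigenvalue_of_def by blast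
  then obtain i0 where "i0 < n" "v i0 \<noteq> 0" by blast
  define s where "s = (\<Sum>j<n. v j)"
  have row: "\<mu> * v i = of_real \<epsilon> * v i + of_real (1 - \<epsilon>) * s" if "i < n" for i
  proof -
    have "\<mu> * v i = (\<Sum>j<n. (if j = i then of_real \<epsilon> * v j else 0) + of_real (1 - \<epsilon>) * v j)"
      unfolding eigen[rule_format, OF that, symmetric]
    proof (rule sum.cong)
      fix j assume "j \<in> {..<n}"
      then show "complex_of_real (I_minus (ctln_W E \<epsilon> \<delta>) i j) * v j
          = (if j = i then of_real \<epsilon> * v j else 0) + of_real (1 - \<epsilon>) * v j"
        using assms(1) that unfolding I_minus_def ctln_W_def is_clique_def
        by (cases "i = j") (auto simp: algebra_simps)
    qed simp
    also have "\<dots> = of_real \<epsilon> * v i + of_real (1 - \<epsilon>) * s"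
      using that unfolding s_def by (simp add: sum.distrib sum_distrib_left)
    finally show ?thesis .
  qed
  show ?thesis
  proof (cases "s = 0")
    case True
    then show ?thesis using row[OF \<open>i0 < n\<close>] \<open>v i0 \<noteq> 0\<close> by simp
  next
    case False
    have "\<mu> * s = (\<Sum>i<n. \<mu> * v i)" unfolding s_def by (simp add: sum_distrib_left)
    also have "\<dots> = (\<Sum>i<n. of_real \<epsilon> * v i + of_real (1 - \<epsilon>) * s)"
      by (rule sum.cong) (simp_all add: row)
    also have "\<dots> = of_real \<epsilon> * s + of_nat n * (of_real (1 - \<epsilon>) * s)"
      by (simp add: sum.distrib s_def sum_distrib_left)
    also have "\<dots> = of_real (\<epsilon> + real n * (1 - \<epsilon>)) * s"
      by (simp add: algebra_simps)
    finally show ?thesis using False by simp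
  qed
qed

lemma ex_max_on_finite:
  fixes f :: "'a \<Rightarrow> 'b::linorder"
  assumes "finite D" and "D \<noteq> {}"
  shows "\<exists>k\<in>D. \<forall>y\<in>D. f y \<le> f k"
  using Max_in[of "f ` D"] Max_ge[of "f ` D"] assms by fastforce

locale forward_ranking =
  fixes n :: nat and E :: "nat \<Rightarrow> nat \<Rightarrow> bool" and rank :: "nat \<Rightarrow> nat"
  assumes rank_inj: "inj_on rank {0..<n}"
    and forward_edge: "\<lbrakk>u < n; v < n; rank u < rank v\<rbrakk> \<Longrightarrow> E u v"

lemma directed_clique_imp_forward_ranking:
  assumes "directed_clique n E"
  shows "\<exists>rank. forward_ranking n E rank"
proof -
  obtain p where p: "bij_betw p {0..<n} {0..<n}"
    and fwd: "\<forall>i<n. \<forall>j<n. i < j \<longrightarrow> E (p i) (p j)"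
    using assms unfolding directed_clique_def by blast
  define rank where "rank = the_inv_into {0..<n} p"
  have rank_bij: "bij_betw rank {0..<n} {0..<n}"
    unfolding rank_def using p by (rule bij_betw_the_inv_into)
  have p_rank: "p (rank u) = u" if "u < n" for u
    unfolding rank_def using p that by (simp add: bij_betw_def f_the_inv_into_f)
  have "forward_ranking n E rank"
  proof
    show "inj_on rank {0..<n}" using rank_bij by (rule bij_betw_imp_inj_on)
    fix u v assume "u < n" "v < n" "rank u < rank v"
    then show "E u v"
      using fwd[rule_format, of "rank u" "rank v"] bij_betwE[OF rank_bij] p_rank by simp
  qed
  then show ?thesis by blast
qed

context forward_ranking
begin

lemma rank_less_if_not_edge:
  assumes "u < n" "v < n" "u \<noteq> v" "\<not> E u v"
  shows "rank v < rank u"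
proof -
  have "rank u \<noteq> rank v" using assms inj_on_eq_iff[OF rank_inj] by simp
  moreover have "\<not> rank u < rank v" using assms forward_edge by blast
  ultimately show ?thesis by simp
qed

lemma target_free_clique_exists_on:
  assumes "finite V" "V \<subseteq> {0..<n}"
  shows "\<exists>\<sigma>\<subseteq>V. is_clique E \<sigma> \<and> (\<forall>k\<in>V. \<not> is_target E \<sigma> k)"
  using assms
  \<comment> \<open>nodes are added in order of decreasing rank\<close>
proof (induction V rule: finite_ranking_induct[where f = "\<lambda>v. - int (rank v)"])
  case empty
  show ?case unfolding is_clique_def by blast
next
  case (insert x V)
  then obtain \<sigma> where \<sigma>: "\<sigma> \<subseteq> V" "is_clique E \<sigma>" "\<forall>k\<in>V. \<not> is_target E \<sigma> k"
    by auto
  show ?case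
  proof (cases "is_target E \<sigma> x")
    case True
    have "E x i" if "i \<in> \<sigma>" for i
    proof (rule forward_edge)
      show "x < n" "i < n" using insert.prems \<sigma>(1) that by auto
      have "rank x \<le> rank i" using insert.hyps(2) \<sigma>(1) that by force
      moreover have "rank x \<noteq> rank i"
        using True that \<open>x < n\<close> \<open>i < n\<close> inj_on_eq_iff[OF rank_inj]
        unfolding is_target_def by fastforce
      ultimately show "rank x < rank i" by simp
    qed
    then have "is_clique E (insert x \<sigma>)"
      using True \<sigma>(2) unfolding is_clique_def is_target_def by blast
    moreover have "\<not> is_target E (insert x \<sigma>) k" if "k \<in> insert x V" for k
      using \<sigma>(3) that unfolding is_target_def by auto
    ultimately show ?thesis using \<sigma>(1) by blast
  next
    case False
    then show ?thesis using \<sigma> by blast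
  qed
qed

lemma target_free_contains_clique_node:
  assumes "is_clique E \<sigma>" "target_free n E \<tau>" "\<tau> \<subseteq> {0..<n}" "k \<in> \<sigma>" "k < n"
    and above: "\<forall>i\<in>\<tau>. rank k < rank i \<longrightarrow> i \<in> \<sigma>"
  shows "k \<in> \<tau>"
proof (rule ccontr)
  assume "k \<notin> \<tau>"
  then obtain i where "i \<in> \<tau>" "\<not> E i k"
    using assms(2) \<open>k < n\<close> unfolding target_free_def is_target_def by blast
  moreover have "i \<noteq> k" "i < n" using \<open>k \<notin> \<tau>\<close> \<open>i \<in> \<tau>\<close> assms(3) by auto
  ultimately have "i \<in> \<sigma>" using above rank_less_if_not_edge \<open>k < n\<close> by blast
  then show False using assms(1,4) \<open>i \<noteq> k\<close> \<open>\<not> E i k\<close> unfolding is_clique_def by blast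
qed

lemma target_free_clique_unique:
  assumes "\<sigma> \<subseteq> {0..<n}" "is_clique E \<sigma>" "target_free n E \<sigma>"
    and "\<tau> \<subseteq> {0..<n}" "is_clique E \<tau>" "target_free n E \<tau>"
  shows "\<sigma> = \<tau>"
proof (rule ccontr)
  assume "\<sigma> \<noteq> \<tau>"
  define D where "D = (\<sigma> - \<tau>) \<union> (\<tau> - \<sigma>)"
  have "finite D" using assms(1,4) finite_subset unfolding D_def by blast
  moreover have "D \<noteq> {}" using \<open>\<sigma> \<noteq> \<tau>\<close> unfolding D_def by blast
  ultimately obtain k where "k \<in> D" and top: "\<forall>y\<in>D. rank y \<le> rank k"
    using ex_max_on_finite by blast
  have "k < n" using \<open>k \<in> D\<close> assms(1,4) unfolding D_def by auto
  have "i \<in> \<sigma> \<longleftrightarrow> i \<in> \<tau>" if "rank k < rank i" for i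
    using top that unfolding D_def by force
  then show False
    using \<open>k \<in> D\<close> target_free_contains_clique_node[OF assms(2,6,4) _ \<open>k < n\<close>]
      target_free_contains_clique_node[OF assms(5,3,1) _ \<open>k < n\<close>]
    unfolding D_def by blast
qed

lemma target_free_clique_exists:
  "\<exists>\<sigma>\<subseteq>{0..<n}. is_clique E \<sigma> \<and> target_free n E \<sigma>"
  using target_free_clique_exists_on[of "{0..<n}"] unfolding target_free_def by auto

lemma fixed_point_support_is_clique:
  assumes fp: "is_fixed_point n (ctln_W E \<epsilon> \<delta>) \<theta> x" and "0 < \<epsilon>" "0 < \<delta>"
  shows "is_clique E {i. i < n \<and> 0 < x i}"
proof (rule ccontr)
  let ?S = "{i. i < n \<and> 0 < x i}"
  define K where "K = {k \<in> ?S. \<exists>j\<in>?S. rank j < rank k \<and> \<not> E k j}"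
  assume "\<not> is_clique E ?S"
  then obtain a b where "a \<in> ?S" "b \<in> ?S" "a \<noteq> b" "\<not> E a b \<or> \<not> E b a"
    unfolding is_clique_def by blast
  then have "K \<noteq> {}" using rank_less_if_not_edge unfolding K_def by blast
  moreover have "finite K" unfolding K_def by simp
  ultimately obtain k where "k \<in> K" and top: "\<forall>y\<in>K. rank y \<le> rank k"
    using ex_max_on_finite by blast
  then obtain j where "j \<in> ?S" "k \<in> ?S" "rank j < rank k" "\<not> E k j"
    unfolding K_def by blast
  have "E i k" if "i \<in> ?S" "i \<noteq> k" for i
  proof (cases "rank i < rank k")
    case True
    then show ?thesis using forward_edge that \<open>k \<in> ?S\<close> by blast
  next
    case False
    then have "rank k < rank i"
      using inj_on_eq_iff[OF rank_inj] that \<open>k \<in> ?S\<close> by fastforce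
    then have "i \<notin> K" using top by force
    then show ?thesis using \<open>rank k < rank i\<close> that \<open>k \<in> ?S\<close> unfolding K_def by blast
  qed
  moreover have "E j k" using forward_edge \<open>j \<in> ?S\<close> \<open>k \<in> ?S\<close> \<open>rank j < rank k\<close> by blast
  ultimately show False
    using no_domination_in_fixed_point_support[OF fp assms(2,3), of j k]
      \<open>j \<in> ?S\<close> \<open>k \<in> ?S\<close> \<open>rank j < rank k\<close> \<open>\<not> E k j\<close>
    by auto
qed

lemma FP_ctln_eq_target_free_clique:
  assumes "\<sigma> \<subseteq> {0..<n}" "is_clique E \<sigma>" "target_free n E \<sigma>"
    and "0 < \<epsilon>" "\<epsilon> < 1" "0 < \<delta>" "0 < \<theta>"
  shows "FP n (ctln_W E \<epsilon> \<delta>) \<theta> = {\<sigma>}"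
proof
  show "{\<sigma>} \<subseteq> FP n (ctln_W E \<epsilon> \<delta>) \<theta>" using target_free_clique_in_FP[OF assms] by simp
  show "FP n (ctln_W E \<epsilon> \<delta>) \<theta> \<subseteq> {\<sigma>}"
  proof
    fix \<tau> assume "\<tau> \<in> FP n (ctln_W E \<epsilon> \<delta>) \<theta>"
    then obtain x where fp: "is_fixed_point n (ctln_W E \<epsilon> \<delta>) \<theta> x"
      and \<tau>: "\<tau> = {i. i < n \<and> 0 < x i}"
      unfolding FP_def by blast
    have "\<tau> \<subseteq> {0..<n}" unfolding \<tau> by auto
    then have "\<tau> = \<sigma>"
      using target_free_clique_unique[OF _ _ _ assms(1-3)] \<tau>
        fixed_point_support_is_clique[OF fp assms(4,6)]
        target_free_fixed_point_support[OF fp assms(4-7)]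
      by simp
    then show "\<tau> \<in> {\<sigma>}" by simp
  qed
qed

end

theorem proposition1:
  fixes n :: nat and E :: "nat \<Rightarrow> nat \<Rightarrow> bool" and \<epsilon> \<delta> \<theta> :: real
  assumes "simple_digraph n E"
    and "directed_clique n E"
    and "legal_params \<epsilon> \<delta>"
    and "\<theta> > 0"
    and "nondegenerate n (ctln_W E \<epsilon> \<delta>) \<theta>"
  shows "(\<exists>\<sigma>. (\<forall>\<tau>. (\<tau> \<subseteq> {0..<n} \<and> is_clique E \<tau> \<and> target_free n E \<tau>) \<longleftrightarrow> \<tau> = \<sigma>)
              \<and> FP n (ctln_W E \<epsilon> \<delta>) \<theta> = {\<sigma>})
         \<and> (stable_motif n (ctln_W E \<epsilon> \<delta>) \<theta> \<longleftrightarrow> is_clique E {0..<n})"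
proof -
  have "0 < \<delta>" "0 < \<epsilon>" "\<epsilon> < \<delta> / (\<delta> + 1)"
    using assms(3) unfolding legal_params_def by auto
  moreover from \<open>0 < \<delta>\<close> have "\<delta> / (\<delta> + 1) < 1" by simp
  ultimately have params: "0 < \<epsilon>" "\<epsilon> < 1" "0 < \<delta>" by linarith+
  obtain rank where "forward_ranking n E rank"
    using directed_clique_imp_forward_ranking[OF assms(2)] by blast
  then interpret forward_ranking n E rank .
  obtain \<sigma> where \<sigma>: "\<sigma> \<subseteq> {0..<n}" "is_clique E \<sigma>" "target_free n E \<sigma>"
    using target_free_clique_exists by blast
  have unique: "\<forall>\<tau>. (\<tau> \<subseteq> {0..<n} \<and> is_clique E \<tau> \<and> target_free n E \<tau>) \<longleftrightarrow> \<tau> = \<sigma>"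
    using target_free_clique_unique[OF _ _ _ \<sigma>] \<sigma> by blast
  have FP: "FP n (ctln_W E \<epsilon> \<delta>) \<theta> = {\<sigma>}"
    using FP_ctln_eq_target_free_clique[OF \<sigma> params assms(4)] .
  have "target_free n E {0..<n}" unfolding target_free_def is_target_def by auto
  then have "is_clique E {0..<n} \<longleftrightarrow> {0..<n} = \<sigma>" using unique \<sigma> by blast
  moreover have "0 < Re \<mu>"
    if "is_clique E {0..<n}" "eigenvalue_of n (I_minus (ctln_W E \<epsilon> \<delta>)) \<mu>" for \<mu>
    using complete_ctln_eigenvalues[OF that] params by (auto intro!: add_pos_nonneg)
  ultimately have "stable_motif n (ctln_W E \<epsilon> \<delta>) \<theta> \<longleftrightarrow> is_clique E {0..<n}"
    unfolding stable_motif_def FP by auto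
  with unique FP show ?thesis by blast
qed

end
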